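(* Let $\omega\in(0,1)$ and $I=\lceil\log\omega/\log\gamma\rceil$. Let $\pi_0$ be an arbitrary deterministic stationary memoryless policy and, for $i=1,\dots,I$, let $\hat q_i:\mathcal{S}\times\mathcal{A}\to\mathbb{R}$ be any function with $|\hat q_i(s,a)-q^{\pi_{i-1}}(s,a)|\le\omega$ for all $(s,a)\in\mathcal{S}\times\mathcal{A}$, and set $\pi_i=\pi_{\hat q_i,\pi_{i-1},\emptyset}$ (the CAPI update with $\mathcal{S}_{\text{fix}}=\emptyset$). Then $\pi_I$ is $5\omega/(1-\gamma)$-optimal on $\mathcal{S}$, i.e. $v^\star(s)-v^{\pi_I}(s)\le 5\omega/(1-\gamma)$ for all $s\in\mathcal{S}$.
   Context: An MDP has measurable state space $\mathcal{S}$, finite ordered action set $\mathcal{A}=(\mathcal{A}_1,\dots,\mathcal{A}_{|\mathcal{A}|})$, transition kernel $P$ and rewards in $[0,1]$; discount $\gamma\in(0,1)$. $v^\pi(s)=\mathbb{E}_{\pi,s}[\sum_{t\ge0}\gamma^tR_t]$, $q^\pi(s,a)=\mathbb{E}_{\pi,s,a}[\sum_{t\ge0}\gamma^tR_t]$, $v^\star=\sup_\pi v^\pi$. A policy $\pi$ is $\Delta$-optimal on $\mathcal{S}'$ if $v^\star(s)-v^\pi(s)\le\Delta$ for all $s\in\mathcal{S}'$. CAPI update: given $\hat q$, a deterministic policy $\pi$, $\omega>0$ and $\mathcal{S}_{\text{fix}}\subseteq\mathcal{S}$, $\pi_{\hat q,\pi,\mathcal{S}_{\text{fix}}}(s)=\arg\max_a\hat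 q(s,a)$ (ties broken by smallest index) if $s\notin\mathcal{S}_{\text{fix}}$ and $\hat q(s,\pi(s))+\omega<\max_a\hat q(s,a)-\omega$, and $=\pi(s)$ otherwise. *)

theory Defs
  imports "HOL-Probability.Probability"
begin

text \<open>States of type 's,
  with state space the measurable space M; actions form a finite linearly ordered
  type 'a (the order is the index order of the action list).  P s a is the next-state
  distribution, r s a the (mean) reward, g the discount factor.\<close>

definition is_mdp :: "'s measure \<Rightarrow> ('s \<Rightarrow> 'a \<Rightarrow> 's measure) \<Rightarrow> ('s \<Rightarrow> 'a \<Rightarrow> real) \<Rightarrow> real \<Rightarrow> bool" where
  "is_mdp M P r g \<longleftrightarrow>
     (\<forall>s\<in>space M. \<forall>a. prob_space (P s a) \<and> sets (P s a) = sets M) \<and>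
     (\<forall>a. (\<lambda>s. P s a) \<in> M \<rightarrow>\<^sub>M subprob_algebra M) \<and>
     (\<forall>a. (\<lambda>s. r s a) \<in> borel_measurable M) \<and>
     (\<forall>s\<in>space M. \<forall>a. 0 \<le> r s a \<and> r s a \<le> 1) \<and>
     0 < g \<and> g < 1"

text \<open>General (history-dependent, randomized) policies: the history is the list of
  previously visited state-action pairs, the second argument the current state.\<close>

type_synonym ('s, 'a) policy = "('s \<times> 'a) list \<Rightarrow> 's \<Rightarrow> 'a pmf"

text \<open>Expected discounted reward over the first n steps, when the history so far is h
  and the current state is s (finite-horizon recursion for the trajectory law).\<close>

fun horizon_value :: "('s \<Rightarrow> 'a \<Rightarrow> 's measure) \<Rightarrow> ('s \<Rightarrow> 'a \<Rightarrow> real) \<Rightarrow> real \<Rightarrow> ('s, 'a) policy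
     \<Rightarrow> nat \<Rightarrow> ('s \<times> 'a) list \<Rightarrow> 's \<Rightarrow> ennreal" where
  "horizon_value P r g \<pi> 0 h s = 0"
| "horizon_value P r g \<pi> (Suc n) h s =
     (\<integral>\<^sup>+ a. (ennreal (r s a) + ennreal g *
        (\<integral>\<^sup>+ s'. horizon_value P r g \<pi> n (h @ [(s, a)]) s' \<partial>(P s a))) \<partial>measure_pmf (\<pi> h s))"

text \<open>v^pi(s) = E_{pi,s}[sum_t g^t R_t]\<close>
definition mdp_value :: "('s \<Rightarrow> 'a \<Rightarrow> 's measure) \<Rightarrow> ('s \<Rightarrow> 'a \<Rightarrow> real) \<Rightarrow> real \<Rightarrow> ('s, 'a) policy \<Rightarrow> 's \<Rightarrow> real" where
  "mdp_value P r g \<pi> s = enn2real (SUP n. horizon_value P r g \<pi> n [] s)"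

definition opt_value :: "('s \<Rightarrow> 'a \<Rightarrow> 's measure) \<Rightarrow> ('s \<Rightarrow> 'a \<Rightarrow> real) \<Rightarrow> real \<Rightarrow> 's \<Rightarrow> real" where
  "opt_value P r g s = enn2real (SUP \<pi>. SUP n. horizon_value P r g \<pi> n [] s)"

definition det_policy :: "('s \<Rightarrow> 'a) \<Rightarrow> ('s, 'a) policy" where
  "det_policy d = (\<lambda>h s. return_pmf (d s))"

text \<open>q^d(s,a) = E_{d,s,a}[sum_t g^t R_t]: first action a, then follow d.\<close>
definition q_value :: "('s \<Rightarrow> 'a \<Rightarrow> 's measure) \<Rightarrow> ('s \<Rightarrow> 'a \<Rightarrow> real) \<Rightarrow> real \<Rightarrow> ('s \<Rightarrow> 'a) \<Rightarrow> 's \<Rightarrow> 'a \<Rightarrow> real" where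
  "q_value P r g d s a =
     mdp_value P r g (\<lambda>h s'. if h = [] then return_pmf a else return_pmf (d s')) s"

text \<open>CAPI update; ties in the argmax broken by the smallest action.\<close>
definition capi :: "('s \<Rightarrow> 'a::{finite,linorder} \<Rightarrow> real) \<Rightarrow> ('s \<Rightarrow> 'a) \<Rightarrow> real \<Rightarrow> 's set \<Rightarrow> 's \<Rightarrow> 'a" where
  "capi qh d \<omega> Sfix s =
     (if s \<notin> Sfix \<and> qh s (d s) + \<omega> < Max (range (qh s)) - \<omega>
      then (LEAST a. \<forall>b. qh s b \<le> qh s a) else d s)"

end

theory Submission
  imports Defs
begin

text \<open>Each CAPI step switches action only when the estimated gain exceeds 2\<omega>, so it never
  decreases the true q-value of the previous policy (policy improvement), and it is greedy
  with respect to that q-value up to 4\<omega>. If every policy is dominated by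
  v^{\<pi>_i} + e_i, then one Bellman step through the 4\<omega>-greedy improvement \<pi>_{i+1}
  gives e_{i+1} = 4\<omega> + \<gamma> e_i. Starting from e_0 = 1/(1-\<gamma>) this yields
  e_I \<le> \<gamma>^I/(1-\<gamma>) + 4\<omega>/(1-\<gamma>) \<le> 5\<omega>/(1-\<gamma>) by the choice of I.\<close>

lemma SUP_eq_SUP_Suc:
  fixes f :: "nat \<Rightarrow> 'a::complete_lattice"
  assumes "f 0 = bot"
  shows "(SUP n. f n) = (SUP n. f (Suc n))"
proof -
  have "range f = insert (f 0) (range (\<lambda>n. f (Suc n)))"
    by (auto simp: image_iff) (metis not0_implies_Suc)
  then show ?thesis using assms by simp
qed

lemma nn_integral_pmf_le_const:
  assumes "\<And>a. f a \<le> c"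
  shows "(\<integral>\<^sup>+a. f a \<partial>measure_pmf p) \<le> c"
  by (rule measure_pmf.nn_integral_le_const) (auto intro: assms)

lemma ennreal_enn2real_of_le: "x \<le> ennreal c \<Longrightarrow> ennreal (enn2real x) = x"
  by (metis ennreal_enn2real ennreal_less_top order.strict_trans1)

lemma pow_ceiling_log_le:
  fixes g \<omega> :: real
  assumes "0 < g" "g < 1" "0 < \<omega>"
  shows "g ^ nat \<lceil>ln \<omega> / ln g\<rceil> \<le> \<omega>"
proof -
  let ?I = "nat \<lceil>ln \<omega> / ln g\<rceil>"
  have "ln g < 0" using assms by simp
  moreover have "ln \<omega> / ln g \<le> real ?I" by linarith
  ultimately have "real ?I * ln g \<le> ln \<omega>" by (simp add: divide_le_eq mult.commute)
  then have "ln (g ^ ?I) \<le> ln \<omega>" using assms by (simp add: ln_realpow)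
  then show ?thesis using assms by simp
qed

subsection \<open>The CAPI update at a single state\<close>

lemma Least_argmax_iff:
  fixes f :: "'a::{finite,linorder} \<Rightarrow> real"
  shows "(LEAST a. \<forall>b. f b \<le> f a) = x \<longleftrightarrow>
     (\<forall>b. f b \<le> f x) \<and> (\<forall>c. (\<forall>b. f b \<le> f c) \<longrightarrow> x \<le> c)"
proof
  assume "(\<forall>b. f b \<le> f x) \<and> (\<forall>c. (\<forall>b. f b \<le> f c) \<longrightarrow> x \<le> c)"
  then show "(LEAST a. \<forall>b. f b \<le> f a) = x" by (intro Least_equality) auto
next
  let ?argmax = "{a. \<forall>b. f b \<le> f a}"
  assume "(LEAST a. \<forall>b. f b \<le> f a) = x"
  moreover have "Max (range f) \<in> range f" by (rule Max_in) auto
  then obtain m where "f m = Max (range f)" by (metis imageE)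
  then have "m \<in> ?argmax" by simp
  then have "?argmax \<noteq> {}" by blast
  ultimately have "x = Min ?argmax"
    using Least_Min[of "\<lambda>a. \<forall>b. f b \<le> f a"] by auto
  moreover have "Min ?argmax \<in> ?argmax"
    using \<open>?argmax \<noteq> {}\<close> by (rule Min_in[OF finite])
  ultimately show "(\<forall>b. f b \<le> f x) \<and> (\<forall>c. (\<forall>b. f b \<le> f c) \<longrightarrow> x \<le> c)"
    by auto
qed

lemma Least_argmax_eq_Max:
  fixes f :: "'a::{finite,linorder} \<Rightarrow> real"
  shows "f (LEAST a. \<forall>b. f b \<le> f a) = Max (range f)"
proof (rule antisym)
  show "f (LEAST a. \<forall>b. f b \<le> f a) \<le> Max (range f)" by simp
  have "Max (range f) \<in> range f" by (rule Max_in) auto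
  then obtain m where "Max (range f) = f m" by blast
  moreover have "\<forall>b. f b \<le> f (LEAST a. \<forall>b. f b \<le> f a)"
    using Least_argmax_iff[of f "LEAST a. \<forall>b. f b \<le> f a"] by simp
  ultimately show "Max (range f) \<le> f (LEAST a. \<forall>b. f b \<le> f a)" by simp
qed

lemma capi_no_worse:
  fixes qh :: "'s \<Rightarrow> 'a::{finite,linorder} \<Rightarrow> real" and q :: "'a \<Rightarrow> real"
  assumes approx: "\<And>a. \<bar>qh s a - q a\<bar> \<le> \<omega>"
  shows "q (d s) \<le> q (capi qh d \<omega> Sfix s)"
proof (cases "s \<notin> Sfix \<and> qh s (d s) + \<omega> < Max (range (qh s)) - \<omega>")
  case True
  let ?m = "LEAST a. \<forall>b. qh s b \<le> qh s a"
  have "capi qh d \<omega> Sfix s = ?m" using True by (simp add: capi_def)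
  moreover note approx[of "d s", unfolded abs_le_iff] approx[of ?m, unfolded abs_le_iff Least_argmax_eq_Max]
  ultimately show ?thesis using True by (simp only:) linarith
next
  case False
  then have "capi qh d \<omega> Sfix s = d s" unfolding capi_def by auto
  then show ?thesis by simp
qed

lemma capi_near_greedy:
  fixes qh :: "'s \<Rightarrow> 'a::{finite,linorder} \<Rightarrow> real" and q :: "'a \<Rightarrow> real"
  assumes "s \<notin> Sfix" and approx: "\<And>a. \<bar>qh s a - q a\<bar> \<le> \<omega>"
  shows "q a \<le> q (capi qh d \<omega> Sfix s) + 4 * \<omega>"
proof -
  let ?m = "LEAST a. \<forall>b. qh s b \<le> qh s a"
  have "qh s a \<le> Max (range (qh s))" by simp
  note bounds = this approx[of a, unfolded abs_le_iff] approx[of "d s", unfolded abs_le_iff]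
    approx[of ?m, unfolded abs_le_iff Least_argmax_eq_Max]
  show ?thesis
  proof (cases "qh s (d s) + \<omega> < Max (range (qh s)) - \<omega>")
    case True
    then have "capi qh d \<omega> Sfix s = ?m" using \<open>s \<notin> Sfix\<close> by (simp add: capi_def)
    then show ?thesis using bounds by (simp only:) linarith
  next
    case False
    then have "capi qh d \<omega> Sfix s = d s" by (simp add: capi_def)
    then show ?thesis using False bounds by (simp only:) linarith
  qed
qed

lemma measurable_capi:
  fixes qh :: "'s \<Rightarrow> 'a::{finite,linorder} \<Rightarrow> real"
  assumes d: "d \<in> M \<rightarrow>\<^sub>M count_space UNIV"
    and qh[measurable]: "\<And>a. (\<lambda>s. qh s a) \<in> borel_measurable M"
    and Sfix[measurable]: "Sfix \<in> sets M"
  shows "capi qh d \<omega> Sfix \<in> M \<rightarrow>\<^sub>M count_space UNIV"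
proof -
  have [measurable]: "(\<lambda>s. qh s (d s)) \<in> borel_measurable M"
    by (rule measurable_compose_countable[OF qh d])
  have [measurable]: "(\<lambda>s. Max (range (qh s))) \<in> borel_measurable M"
    by (rule borel_measurable_Max) auto
  have argmax: "(\<lambda>s. LEAST a. \<forall>b. qh s b \<le> qh s a) \<in> M \<rightarrow>\<^sub>M count_space UNIV"
  proof (subst measurable_count_space_eq2_countable, safe)
    fix x
    have "(\<lambda>s. LEAST a. \<forall>b. qh s b \<le> qh s a) -` {x} \<inter> space M =
      {s \<in> space M. (\<forall>b. qh s b \<le> qh s x) \<and> (\<forall>c. (\<forall>b. qh s b \<le> qh s c) \<longrightarrow> x \<le> c)}"
      using Least_argmax_iff by blast
    also have "\<dots> \<in> sets M" by measurable
    finally show "(\<lambda>s. LEAST a. \<forall>b. qh s b \<le> qh s a) -` {x} \<inter> space M \<in> sets M" .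
  qed auto
  show ?thesis
    unfolding capi_def by (rule measurable_If[OF argmax d]) measurable
qed

lemma measurable_capi_iterates:
  fixes qh :: "nat \<Rightarrow> 's \<Rightarrow> 'a::{finite,linorder} \<Rightarrow> real"
  assumes d0: "d 0 \<in> M \<rightarrow>\<^sub>M count_space UNIV" and "Sfix \<in> sets M"
    and qh: "\<And>i a. i < I \<Longrightarrow> (\<lambda>s. qh (Suc i) s a) \<in> borel_measurable M"
    and upd: "\<And>i s. i < I \<Longrightarrow> s \<in> space M \<Longrightarrow>
      d (Suc i) s = capi (qh (Suc i)) (d i) \<omega> Sfix s"
  shows "i \<le> I \<Longrightarrow> d i \<in> M \<rightarrow>\<^sub>M count_space UNIV"
proof (induction i)
  case (Suc i)
  then have "i < I" by simp
  have "capi (qh (Suc i)) (d i) \<omega> Sfix \<in> M \<rightarrow>\<^sub>M count_space UNIV"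
    using Suc \<open>Sfix \<in> sets M\<close> qh[OF \<open>i < I\<close>] by (intro measurable_capi) auto
  then show ?case
    using upd[OF \<open>i < I\<close>] by (subst measurable_cong) auto
qed (rule d0)

subsection \<open>Values of deterministic stationary policies\<close>

locale discounted_mdp =
  fixes M :: "'s measure" and P :: "'s \<Rightarrow> 'a::{finite,linorder} \<Rightarrow> 's measure"
    and r :: "'s \<Rightarrow> 'a \<Rightarrow> real" and g :: real
  assumes is_mdp: "is_mdp M P r g"
begin

lemma prob_space_P: "s \<in> space M \<Longrightarrow> prob_space (P s a)"
  and sets_P: "s \<in> space M \<Longrightarrow> sets (P s a) = sets M"
  and measurable_P: "(\<lambda>s. P s a) \<in> M \<rightarrow>\<^sub>M subprob_algebra M"
  and measurable_r: "(\<lambda>s. r s a) \<in> borel_measurable M"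
  and r_le_1: "s \<in> space M \<Longrightarrow> r s a \<le> 1"
  and discount_pos: "0 < g"
  and discount_less_1: "g < 1"
  using is_mdp by (auto simp: is_mdp_def)

lemma space_P: "s \<in> space M \<Longrightarrow> space (P s a) = space M"
  using sets_P sets_eq_imp_space_eq by blast

lemma measurable_P_cong: "s \<in> space M \<Longrightarrow> f \<in> borel_measurable M \<Longrightarrow> f \<in> borel_measurable (P s a)"
  using measurable_cong_sets[OF sets_P refl] by blast

definition vmax :: real where "vmax = 1 / (1 - g)"

lemma vmax_pos: "0 < vmax"
  using discount_less_1 by (simp add: vmax_def)

lemma vmax_fixpoint: "1 + g * vmax = vmax"
  using discount_less_1 by (simp add: vmax_def field_simps)

lemma ennreal_vmax_fixpoint: "ennreal 1 + ennreal g * ennreal vmax = ennreal vmax"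
  using ennreal_plus[of 1 "g * vmax"] discount_pos vmax_pos vmax_fixpoint by (simp add: ennreal_mult)

lemma nn_integral_P_le_const:
  assumes "s \<in> space M" "\<And>x. x \<in> space M \<Longrightarrow> f x \<le> c"
  shows "(\<integral>\<^sup>+x. f x \<partial>P s a) \<le> c"
proof -
  interpret prob_space "P s a" using prob_space_P assms by auto
  show ?thesis by (rule nn_integral_le_const) (use assms space_P in \<open>auto intro!: AE_I2\<close>)
qed

lemma nn_integral_P_add_const:
  assumes "f \<in> borel_measurable M" "s \<in> space M"
  shows "(\<integral>\<^sup>+x. f x + ennreal c \<partial>P s a) = (\<integral>\<^sup>+x. f x \<partial>P s a) + ennreal c"
proof -
  interpret prob_space "P s a" using prob_space_P assms by auto
  show ?thesis
    by (simp add: nn_integral_add[OF measurable_P_cong[OF assms(2,1)]] emeasure_space_1)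
qed

lemma horizon_value_le_vmax: "s \<in> space M \<Longrightarrow> horizon_value P r g pol n h s \<le> ennreal vmax"
proof (induction n arbitrary: h s)
  case (Suc n)
  have "horizon_value P r g pol (Suc n) h s \<le> ennreal 1 + ennreal g * ennreal vmax"
    by (simp only: horizon_value.simps, rule nn_integral_pmf_le_const,
        intro add_mono mult_left_mono nn_integral_P_le_const Suc)
       (use Suc.prems r_le_1 space_P in auto)
  then show ?case by (simp only: ennreal_vmax_fixpoint)
qed simp

text \<open>The kernel is only constrained on space M; cutting the recursion off outside
  it makes the n-step values measurable.\<close>

primrec det_horizon_value :: "('s \<Rightarrow> 'a) \<Rightarrow> nat \<Rightarrow> 's \<Rightarrow> ennreal" where
  "det_horizon_value d 0 s = 0"
| "det_horizon_value d (Suc n) s = (if s \<in> space M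
     then ennreal (r s (d s)) + ennreal g * (\<integral>\<^sup>+x. det_horizon_value d n x \<partial>P s (d s)) else 0)"

definition det_value :: "('s \<Rightarrow> 'a) \<Rightarrow> 's \<Rightarrow> ennreal" where
  "det_value d s = (SUP n. det_horizon_value d n s)"

definition det_qvalue :: "('s \<Rightarrow> 'a) \<Rightarrow> 's \<Rightarrow> 'a \<Rightarrow> ennreal" where
  "det_qvalue d s a = ennreal (r s a) + ennreal g * (\<integral>\<^sup>+x. det_value d x \<partial>P s a)"

lemma measurable_det_horizon_value:
  assumes d: "d \<in> M \<rightarrow>\<^sub>M count_space UNIV"
  shows "det_horizon_value d n \<in> borel_measurable M"
proof (induction n)
  case (Suc n)
  have [measurable]: "(\<lambda>s. \<integral>\<^sup>+x. det_horizon_value d n x \<partial>P s (d s)) \<in> borel_measurable M"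
    by (rule measurable_compose[OF measurable_compose_countable[OF measurable_P d]
          nn_integral_measurable_subprob_algebra[OF Suc]])
  have [measurable]: "(\<lambda>s. r s (d s)) \<in> borel_measurable M"
    by (rule measurable_compose_countable[OF measurable_r d])
  show ?case by (simp add: measurable_If_set)
qed simp

lemma det_horizon_value_mono: "det_horizon_value d n s \<le> det_horizon_value d (Suc n) s"
  by (induction n arbitrary: s) (auto intro!: add_mono mult_left_mono nn_integral_mono)

lemma measurable_det_value: "d \<in> M \<rightarrow>\<^sub>M count_space UNIV \<Longrightarrow> det_value d \<in> borel_measurable M"
  unfolding det_value_def by (intro borel_measurable_SUP) (auto intro: measurable_det_horizon_value)

lemma horizon_value_det_policy:
  "s \<in> space M \<Longrightarrow> horizon_value P r g (det_policy d) n h s = det_horizon_value d n s"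
proof (induction n arbitrary: h s)
  case (Suc n)
  have "(\<integral>\<^sup>+x. horizon_value P r g (det_policy d) n (h @ [(s, d s)]) x \<partial>P s (d s))
      = (\<integral>\<^sup>+x. det_horizon_value d n x \<partial>P s (d s))"
    by (rule nn_integral_cong) (use Suc space_P in auto)
  then show ?case using Suc.prems by (simp add: det_policy_def)
qed simp

lemma det_value_le_vmax: "s \<in> space M \<Longrightarrow> det_value d s \<le> ennreal vmax"
  unfolding det_value_def
  by (rule SUP_least) (metis horizon_value_det_policy horizon_value_le_vmax)

lemma det_qvalue_le_vmax:
  assumes "s \<in> space M"
  shows "det_qvalue d s a \<le> ennreal vmax"
proof -
  have "det_qvalue d s a \<le> ennreal 1 + ennreal g * ennreal vmax"
    unfolding det_qvalue_def using assms
    by (auto intro!: add_mono mult_left_mono nn_integral_P_le_const det_value_le_vmax r_le_1)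
  then show ?thesis by (simp only: ennreal_vmax_fixpoint)
qed

lemma det_value_eq_mdp_value:
  assumes "s \<in> space M"
  shows "det_value d s = ennreal (mdp_value P r g (det_policy d) s)"
  using ennreal_enn2real_of_le[OF det_value_le_vmax[OF assms]]
  by (simp add: mdp_value_def det_value_def horizon_value_det_policy[OF assms])

lemma det_qvalue_SUP:
  assumes d: "d \<in> M \<rightarrow>\<^sub>M count_space UNIV" and s: "s \<in> space M"
  shows "det_qvalue d s a
    = (SUP n. ennreal (r s a) + ennreal g * (\<integral>\<^sup>+x. det_horizon_value d n x \<partial>P s a))"
proof -
  have "(\<integral>\<^sup>+x. det_value d x \<partial>P s a) = (SUP n. \<integral>\<^sup>+x. det_horizon_value d n x \<partial>P s a)"
    unfolding det_value_def
    by (rule nn_integral_monotone_convergence_SUP)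
       (auto intro: incseq_SucI le_funI det_horizon_value_mono
          measurable_P_cong[OF s measurable_det_horizon_value[OF d]])
  then show ?thesis
    by (simp add: det_qvalue_def SUP_mult_left_ennreal ennreal_SUP_add_right)
qed

lemma det_value_eq_det_qvalue:
  assumes "d \<in> M \<rightarrow>\<^sub>M count_space UNIV" and s: "s \<in> space M"
  shows "det_value d s = det_qvalue d s (d s)"
  unfolding det_qvalue_SUP[OF assms] det_value_def using s
  by (subst SUP_eq_SUP_Suc) (auto simp: bot_ennreal)

lemma det_qvalue_eq_q_value:
  assumes d: "d \<in> M \<rightarrow>\<^sub>M count_space UNIV" and s: "s \<in> space M"
  shows "det_qvalue d s a = ennreal (q_value P r g d s a)"
proof -
  define pol :: "('s, 'a) policy" where
    "pol = (\<lambda>h s'. if h = [] then return_pmf a else return_pmf (d s'))"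
  have later: "h \<noteq> [] \<Longrightarrow> s \<in> space M \<Longrightarrow> horizon_value P r g pol n h s = det_horizon_value d n s"
    for n h s
  proof (induction n arbitrary: h s)
    case (Suc n)
    have "(\<integral>\<^sup>+x. horizon_value P r g pol n (h @ [(s, d s)]) x \<partial>P s (d s))
        = (\<integral>\<^sup>+x. det_horizon_value d n x \<partial>P s (d s))"
      by (rule nn_integral_cong) (use Suc space_P in auto)
    then show ?case using Suc.prems by (simp add: pol_def)
  qed simp
  have first: "horizon_value P r g pol (Suc n) [] s
      = ennreal (r s a) + ennreal g * (\<integral>\<^sup>+x. det_horizon_value d n x \<partial>P s a)" for n
  proof -
    have "(\<integral>\<^sup>+x. horizon_value P r g pol n [(s, a)] x \<partial>P s a)
        = (\<integral>\<^sup>+x. det_horizon_value d n x \<partial>P s a)"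
      by (rule nn_integral_cong) (use s space_P later in auto)
    then show ?thesis by (simp add: pol_def)
  qed
  have "(SUP n. horizon_value P r g pol n [] s) = (SUP n. horizon_value P r g pol (Suc n) [] s)"
    by (rule SUP_eq_SUP_Suc) (simp add: bot_ennreal)
  also have "\<dots> = det_qvalue d s a"
    by (simp only: first det_qvalue_SUP[OF d s])
  finally show ?thesis
    using ennreal_enn2real_of_le[OF det_qvalue_le_vmax[OF s]]
    by (simp add: q_value_def mdp_value_def pol_def)
qed

subsection \<open>Policy improvement and approximate policy iteration\<close>

lemma det_value_le_horizon_improved:
  assumes d': "d' \<in> M \<rightarrow>\<^sub>M count_space UNIV"
    and improving: "\<And>s. s \<in> space M \<Longrightarrow> det_value d s \<le> det_qvalue d s (d' s)"
  shows "s \<in> space M \<Longrightarrow> det_value d s \<le> det_horizon_value d' n s + ennreal (g ^ n * vmax)"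
proof (induction n arbitrary: s)
  case 0 then show ?case using det_value_le_vmax by simp
next
  case (Suc n)
  have "det_value d s \<le> det_qvalue d s (d' s)" using improving Suc by blast
  also have "\<dots> \<le> ennreal (r s (d' s))
      + ennreal g * (\<integral>\<^sup>+x. det_horizon_value d' n x + ennreal (g ^ n * vmax) \<partial>P s (d' s))"
    unfolding det_qvalue_def
    by (intro add_mono mult_left_mono nn_integral_mono) (use Suc space_P in auto)
  also have "\<dots> = det_horizon_value d' (Suc n) s + ennreal (g ^ Suc n * vmax)"
    using Suc.prems discount_pos vmax_pos
    by (simp add: nn_integral_P_add_const[OF measurable_det_horizon_value[OF d'] Suc.prems]
        distrib_left add.assoc ennreal_mult[symmetric] mult.assoc)
  finally show ?case .
qed

lemma policy_improvement:
  assumes d': "d' \<in> M \<rightarrow>\<^sub>M count_space UNIV"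
    and improving: "\<And>s. s \<in> space M \<Longrightarrow> det_value d s \<le> det_qvalue d s (d' s)"
    and s: "s \<in> space M"
  shows "det_value d s \<le> det_value d' s"
proof -
  define a b where "a = enn2real (det_value d s)" and "b = enn2real (det_value d' s)"
  have a: "det_value d s = ennreal a" and b: "det_value d' s = ennreal b" and "0 \<le> b"
    using ennreal_enn2real_of_le[OF det_value_le_vmax[OF s]] by (auto simp: a_def b_def)
  have "a \<le> b + g ^ n * vmax" for n
  proof -
    have "ennreal a \<le> det_horizon_value d' n s + ennreal (g ^ n * vmax)"
      using det_value_le_horizon_improved[OF d' improving s] a by simp
    also have "\<dots> \<le> ennreal b + ennreal (g ^ n * vmax)"
      using b unfolding det_value_def by (metis add_mono order_refl SUP_upper UNIV_I)
    finally show ?thesis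
      using \<open>0 \<le> b\<close> discount_pos vmax_pos by (simp flip: ennreal_plus)
  qed
  moreover have "(\<lambda>n. b + g ^ n * vmax) \<longlonglongrightarrow> b + 0 * vmax"
    using discount_pos discount_less_1
    by (intro tendsto_intros LIMSEQ_power_zero) simp
  ultimately have "a \<le> b"
    by (intro LIMSEQ_le_const[where X="\<lambda>n. b + g ^ n * vmax"]) auto
  then show ?thesis using a b by (simp add: ennreal_leI)
qed

lemma approx_greedy_step:
  assumes dp: "dp \<in> M \<rightarrow>\<^sub>M count_space UNIV" and d: "d \<in> M \<rightarrow>\<^sub>M count_space UNIV"
    and "0 \<le> e" "0 \<le> w"
    and dominated: "\<And>pol n h s. s \<in> space M \<Longrightarrow> horizon_value P r g pol n h s \<le> det_value dp s + ennreal e"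
    and greedy: "\<And>s a. s \<in> space M \<Longrightarrow> det_qvalue dp s a \<le> det_qvalue dp s (d s) + ennreal w"
    and improving: "\<And>s. s \<in> space M \<Longrightarrow> det_value dp s \<le> det_qvalue dp s (d s)"
    and s: "s \<in> space M"
  shows "horizon_value P r g pol n h s \<le> det_value d s + ennreal (w + g * e)"
proof (cases n)
  case (Suc m)
  have improved: "det_qvalue dp s (d s) \<le> det_value d s"
    unfolding det_value_eq_det_qvalue[OF d s] det_qvalue_def
    by (intro add_mono mult_left_mono nn_integral_mono policy_improvement[OF d improving])
       (use s space_P in auto)
  have "horizon_value P r g pol (Suc m) h s \<le> det_value d s + ennreal (w + g * e)"
  proof (simp only: horizon_value.simps, rule nn_integral_pmf_le_const)
    fix a
    have "ennreal (r s a) + ennreal g * (\<integral>\<^sup>+x. horizon_value P r g pol m (h @ [(s, a)]) x \<partial>P s a)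
        \<le> ennreal (r s a) + ennreal g * (\<integral>\<^sup>+x. det_value dp x + ennreal e \<partial>P s a)"
      by (intro add_mono mult_left_mono nn_integral_mono dominated) (use s space_P in auto)
    also have "\<dots> = det_qvalue dp s a + ennreal g * ennreal e"
      unfolding det_qvalue_def
      by (simp add: nn_integral_P_add_const[OF measurable_det_value[OF dp] s] distrib_left add.assoc)
    also have "\<dots> \<le> det_value d s + ennreal w + ennreal g * ennreal e"
      using order.trans[OF greedy[OF s, of a] add_right_mono[OF improved]] by (rule add_right_mono)
    also have "\<dots> = det_value d s + ennreal (w + g * e)"
      using ennreal_plus[of w "g * e"] ennreal_mult[of g e] assms(3,4) discount_pos
      by (simp add: add.assoc del: ennreal_plus)
    finally show "ennreal (r s a) + ennreal g * (\<integral>\<^sup>+x. horizon_value P r g pol m (h @ [(s, a)]) x \<partial>P s a)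
        \<le> det_value d s + ennreal (w + g * e)" .
  qed
  then show ?thesis using Suc by simp
qed simp

lemma approx_policy_iteration:
  assumes measurable: "\<And>i. i \<le> I \<Longrightarrow> d i \<in> M \<rightarrow>\<^sub>M count_space UNIV" and "0 \<le> w"
    and greedy: "\<And>i s a. i < I \<Longrightarrow> s \<in> space M \<Longrightarrow>
      det_qvalue (d i) s a \<le> det_qvalue (d i) s (d (Suc i) s) + ennreal w"
    and improving: "\<And>i s. i < I \<Longrightarrow> s \<in> space M \<Longrightarrow>
      det_value (d i) s \<le> det_qvalue (d i) s (d (Suc i) s)"
  shows "i \<le> I \<Longrightarrow> s \<in> space M \<Longrightarrow>
    horizon_value P r g pol n h s \<le> det_value (d i) s + ennreal (g ^ i * vmax + w * vmax)"
proof (induction i arbitrary: pol n h s)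
  case 0
  have "horizon_value P r g pol n h s \<le> ennreal vmax"
    by (rule horizon_value_le_vmax[OF 0(2)])
  also have "\<dots> \<le> det_value (d 0) s + ennreal (g ^ 0 * vmax + w * vmax)"
    using \<open>0 \<le> w\<close> vmax_pos by (simp add: add_increasing ennreal_leI)
  finally show ?case .
next
  case (Suc i)
  then have "i < I" and "i \<le> I" by simp_all
  have "w + g * (g ^ i * vmax + w * vmax) = g ^ Suc i * vmax + w * (1 + g * vmax)"
    by (simp add: algebra_simps)
  also have "\<dots> = g ^ Suc i * vmax + w * vmax"
    by (simp only: vmax_fixpoint)
  finally have error_step: "w + g * (g ^ i * vmax + w * vmax) = g ^ Suc i * vmax + w * vmax" .
  have "horizon_value P r g pol n h s
      \<le> det_value (d (Suc i)) s + ennreal (w + g * (g ^ i * vmax + w * vmax))"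
    using \<open>0 \<le> w\<close> vmax_pos discount_pos
    by (intro approx_greedy_step[OF measurable[OF \<open>i \<le> I\<close>] measurable[OF Suc.prems(1)] _
          \<open>0 \<le> w\<close> Suc.IH[OF \<open>i \<le> I\<close>] greedy[OF \<open>i < I\<close>] improving[OF \<open>i < I\<close>]
          Suc.prems(2)]) simp_all
  then show ?case by (simp only: error_step)
qed

lemma opt_value_minus_mdp_value_le:
  assumes s: "s \<in> space M" and "0 \<le> c"
    and dominated: "\<And>pol n. horizon_value P r g pol n [] s \<le> det_value d s + ennreal c"
  shows "opt_value P r g s - mdp_value P r g (det_policy d) s \<le> c"
proof -
  let ?v = "mdp_value P r g (det_policy d) s"
  have "0 \<le> ?v" by (simp add: mdp_value_def)
  have "(SUP pol. SUP n. horizon_value P r g pol n [] s) \<le> ennreal (?v + c)"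
    using dominated \<open>0 \<le> ?v\<close> \<open>0 \<le> c\<close>
    by (intro SUP_least) (simp add: det_value_eq_mdp_value[OF s])
  then have "opt_value P r g s \<le> enn2real (ennreal (?v + c))"
    unfolding opt_value_def by (rule enn2real_mono) simp
  then show ?thesis using \<open>0 \<le> ?v\<close> \<open>0 \<le> c\<close> by (simp del: ennreal_plus)
qed

lemma det_value_le_det_qvalue_capi:
  assumes d: "d \<in> M \<rightarrow>\<^sub>M count_space UNIV" and s: "s \<in> space M"
    and approx: "\<And>a. \<bar>qh s a - q_value P r g d s a\<bar> \<le> \<omega>"
  shows "det_value d s \<le> det_qvalue d s (capi qh d \<omega> Sfix s)"
proof -
  have "q_value P r g d s (d s) \<le> q_value P r g d s (capi qh d \<omega> Sfix s)"
    by (rule capi_no_worse) (rule approx)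
  then have "ennreal (q_value P r g d s (d s)) \<le> ennreal (q_value P r g d s (capi qh d \<omega> Sfix s))"
    by (rule ennreal_leI)
  then show ?thesis
    by (simp add: det_value_eq_det_qvalue[OF d s] det_qvalue_eq_q_value[OF d s])
qed

lemma det_qvalue_le_det_qvalue_capi:
  assumes d: "d \<in> M \<rightarrow>\<^sub>M count_space UNIV" and s: "s \<in> space M" and "s \<notin> Sfix"
    and approx: "\<And>a. \<bar>qh s a - q_value P r g d s a\<bar> \<le> \<omega>"
  shows "det_qvalue d s a \<le> det_qvalue d s (capi qh d \<omega> Sfix s) + ennreal (4 * \<omega>)"
proof -
  let ?q = "q_value P r g d s" and ?new = "capi qh d \<omega> Sfix s"
  have "0 \<le> ?q ?new" by (simp add: q_value_def mdp_value_def)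
  moreover have "0 \<le> \<omega>" using approx[of a] by linarith
  moreover have "ennreal (?q a) \<le> ennreal (?q ?new + 4 * \<omega>)"
    using capi_near_greedy[of s Sfix qh ?q, OF \<open>s \<notin> Sfix\<close> approx] by (rule ennreal_leI)
  ultimately show ?thesis
    by (simp add: det_qvalue_eq_q_value[OF d s])
qed

lemma capi_iterates_dominate:
  fixes qh :: "nat \<Rightarrow> 's \<Rightarrow> 'a \<Rightarrow> real"
  assumes d0: "d 0 \<in> M \<rightarrow>\<^sub>M count_space UNIV" and "0 \<le> \<omega>"
    and qh: "\<And>i a. i < I \<Longrightarrow> (\<lambda>s. qh (Suc i) s a) \<in> borel_measurable M"
    and approx: "\<And>i s a. i < I \<Longrightarrow> s \<in> space M \<Longrightarrow>
      \<bar>qh (Suc i) s a - q_value P r g (d i) s a\<bar> \<le> \<omega>"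
    and upd: "\<And>i s. i < I \<Longrightarrow> s \<in> space M \<Longrightarrow>
      d (Suc i) s = capi (qh (Suc i)) (d i) \<omega> {} s"
    and s: "s \<in> space M"
  shows "horizon_value P r g pol n h s \<le> det_value (d I) s + ennreal (g ^ I * vmax + 4 * \<omega> * vmax)"
proof -
  note measurable = measurable_capi_iterates[OF d0 sets.empty_sets qh upd]
  have improving: "det_value (d i) s' \<le> det_qvalue (d i) s' (d (Suc i) s')"
    and greedy: "det_qvalue (d i) s' a \<le> det_qvalue (d i) s' (d (Suc i) s') + ennreal (4 * \<omega>)"
    if i: "i < I" and s': "s' \<in> space M" for i s' a
    unfolding upd[OF i s']
    using det_value_le_det_qvalue_capi[where qh = "qh (Suc i)", OF measurable s' approx[OF i s']]
      det_qvalue_le_det_qvalue_capi[where qh = "qh (Suc i)", OF measurable s' _ approx[OF i s']] i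
    by simp_all
  show ?thesis
    by (rule approx_policy_iteration[where d = d and I = I and i = I,
          OF measurable _ greedy improving order.refl s])
       (use \<open>0 \<le> \<omega>\<close> in simp_all)
qed

end

theorem theorem3p5:
  fixes M :: "'s measure"
    and P :: "'s \<Rightarrow> 'a::{finite,linorder} \<Rightarrow> 's measure"
    and r :: "'s \<Rightarrow> 'a \<Rightarrow> real"
    and g \<omega> :: real
    and pi :: "nat \<Rightarrow> 's \<Rightarrow> 'a"
    and qh :: "nat \<Rightarrow> 's \<Rightarrow> 'a \<Rightarrow> real"
    and I :: nat
  assumes mdp: "is_mdp M P r g"
    and om: "0 < \<omega>" "\<omega> < 1"
    and I_def: "I = nat \<lceil>ln \<omega> / ln g\<rceil>"
    and pi0: "pi 0 \<in> M \<rightarrow>\<^sub>M count_space UNIV"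
    and qh_meas: "\<forall>i\<in>{1..I}. \<forall>a. (\<lambda>s. qh i s a) \<in> borel_measurable M"
    and qh_approx: "\<forall>i\<in>{1..I}. \<forall>s\<in>space M. \<forall>a.
                      \<bar>qh i s a - q_value P r g (pi (i - 1)) s a\<bar> \<le> \<omega>"
    and upd: "\<forall>i\<in>{1..I}. \<forall>s\<in>space M. pi i s = capi (qh i) (pi (i - 1)) \<omega> {} s"
  shows "\<forall>s\<in>space M. opt_value P r g s - mdp_value P r g (det_policy (pi I)) s \<le> 5 * \<omega> / (1 - g)"
proof
  fix s assume s: "s \<in> space M"
  interpret discounted_mdp M P r g using mdp by unfold_locales
  have Suc_in: "i < I \<Longrightarrow> Suc i \<in> {1..I}" for i by simp
  note capi_iterates = capi_iterates_dominate[where d = pi and qh = qh and I = I,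
      OF pi0 less_imp_le[OF om(1)] qh_meas[rule_format, OF Suc_in]
        qh_approx[rule_format, OF Suc_in, simplified] upd[rule_format, OF Suc_in, simplified] s]
  have "opt_value P r g s - mdp_value P r g (det_policy (pi I)) s \<le> g ^ I * vmax + 4 * \<omega> * vmax"
    by (rule opt_value_minus_mdp_value_le[OF s _ capi_iterates]) (use om vmax_pos discount_pos in simp)
  also have "\<dots> \<le> \<omega> * vmax + 4 * \<omega> * vmax"
    using mult_right_mono[OF pow_ceiling_log_le[OF discount_pos discount_less_1 om(1)], of vmax]
      vmax_pos
    unfolding I_def by linarith
  also have "\<dots> = 5 * \<omega> / (1 - g)"
    by (simp add: vmax_def)
  finally show "opt_value P r g s - mdp_value P r g (det_policy (pi I)) s \<le> 5 * \<omega> / (1 - g)" .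
qed

end
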